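(* Let $r=r(n)\ge3$, $m=m(n)$, $k=k(n)$ be integers with $m=o(r^{-3}n^{3/2})$, $1\le k\le m$ and $k=o\bigl(\frac{n^3}{r^6m^2}\bigr)$, let $K$ be a linear $r$-graph on $[n]$ with edges $e_1,\dots,e_k$, and let $1\le i\le k$. Let $H'$ be chosen uniformly at random from $\mathcal{L}_r(n,m:\overline{e}_i)$, and let $E^*$ be the set of $r$-subsets $e^*$ of $[n]$ with $|e^*\cap e_i|\ge2$. Then, as $n\to\infty$, \[ \mathbb{P}\bigl[\text{some edge of }H'\text{ lies in }E^*\bigr]=\frac{(m-i+1)\binom r2\binom{n-r}{r-2}}{N}+O\Bigl(\frac{r^6m^2}{n^3}\Bigr). \]
   Context: $N=\binom nr$. An $r$-graph on $[n]$ is a set of $r$-subsets of $[n]$ (edges); it is linear if any two distinct edges share at most one vertex. $\mathcal{L}_r(n,m)$ is the set of linear $r$-graphs on $[n]$ with exactly $m$ edges. $\mathcal{L}_r(n,m:\overline{e}_i)$ is the set of $H\in\mathcal{L}_r(n,m)$ that contain $e_1,\dots,e_{i-1}$ as edges but do not contain $e_i$. *)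

theory Defs
  imports Complex_Main "HOL-Library.Landau_Symbols"
begin

definition rsubsets :: "nat \<Rightarrow> nat \<Rightarrow> nat set set" where
  "rsubsets n r = {e. e \<subseteq> {1..n} \<and> card e = r}"

definition linear_rgraph :: "nat \<Rightarrow> nat \<Rightarrow> nat set set \<Rightarrow> bool" where
  "linear_rgraph n r H \<longleftrightarrow> H \<subseteq> rsubsets n r \<and>
     (\<forall>e\<in>H. \<forall>f\<in>H. e \<noteq> f \<longrightarrow> card (e \<inter> f) \<le> 1)"

definition Lin :: "nat \<Rightarrow> nat \<Rightarrow> nat \<Rightarrow> nat set set set" where
  "Lin r n m = {H. linear_rgraph n r H \<and> card H = m}"

text \<open>L_r(n,m : not e_i), edges e_1..e_k given as list es (es!0 = e_1), i is 1-based.\<close>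
definition Lin_bar :: "nat \<Rightarrow> nat \<Rightarrow> nat \<Rightarrow> nat set list \<Rightarrow> nat \<Rightarrow> nat set set set" where
  "Lin_bar r n m es i = {H \<in> Lin r n m. (\<forall>j < i - 1. es ! j \<in> H) \<and> es ! (i - 1) \<notin> H}"

definition Estar :: "nat \<Rightarrow> nat \<Rightarrow> nat set \<Rightarrow> nat set set" where
  "Estar r n ei = {e \<in> rsubsets n r. card (e \<inter> ei) \<ge> 2}"

definition prob_hit :: "nat \<Rightarrow> nat \<Rightarrow> nat \<Rightarrow> nat set list \<Rightarrow> nat \<Rightarrow> real" where
  "prob_hit r n m es i =
     real (card {H \<in> Lin_bar r n m es i. \<exists>e\<in>H. e \<in> Estar r n (es ! (i - 1))})
     / real (card (Lin_bar r n m es i))"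

end

theory Submission
  imports Defs
begin

text \<open>Let \<open>\<G>\<close> be the linear graphs containing \<open>e\<^sub>1, \<dots>, e\<^sub>i\<^sub>-\<^sub>1\<close> but not \<open>e\<^sub>i\<close>, \<open>p\<close> the
  probability that a member of \<open>\<G>\<close> meets \<open>E\<^sup>*\<close>, \<open>N = C(n, r)\<close> and \<open>P = C(r, 2) C(n - 2, r - 2) \<ge> |E\<^sup>*|\<close>.
  Replacing an edge of \<open>H \<inter> E\<^sup>*\<close> by one of the at least \<open>N - (m + 1) P\<close> edges outside \<open>E\<^sup>*\<close> that keep
  \<open>H\<close> linear, and counting the switched pairs from both ends, gives
  \<open>p (1 - (m + 1) P / N) \<le> (m - i + 1) |E\<^sup>*| / N\<close>.  The reverse switching, which trades a free edge of a
  graph avoiding \<open>E\<^sup>*\<close> for a suitable member of \<open>E\<^sup>*\<close>, gives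
  \<open>(1 - p) (m - i + 1) (|E\<^sup>*| - 1 - m W) / N \<le> p\<close>, where \<open>W = (2 r)\<^sup>3 C(n - 3, r - 3)\<close> bounds the members
  of \<open>E\<^sup>*\<close> meeting another edge twice.  As \<open>|E\<^sup>*| = C(r, 2) C(n - r, r - 2) + O(C(r, 3) C(n - 3, r - 3))\<close>
  and \<open>C(n - t, r - t) / N \<le> r\<^sup>t (t / n)\<^sup>t\<close>, every error term is \<open>O(r\<^sup>6 m\<^sup>2 / n\<^sup>3)\<close>.\<close>

section \<open>Counting \<open>r\<close>-subsets\<close>

lemma finite_rsubsets: "finite (rsubsets n r)"
  unfolding rsubsets_def by (rule finite_subset[of _ "Pow {1..n}"]) auto

lemma card_rsubsets: "card (rsubsets n r) = n choose r"
  unfolding rsubsets_def using n_subsets[of "{1..n}" r] by simp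

lemma rsubsetsD: "x \<in> rsubsets n r \<Longrightarrow> finite x \<and> card x = r \<and> x \<subseteq> {1..n}"
  unfolding rsubsets_def by (auto intro: finite_subset)

lemma choose_le_pow: "a choose t \<le> a ^ t"
  by (cases "t \<le> a") (auto simp: binomial_le_pow binomial_eq_0)

lemma card_rsubsets_supset_le:
  assumes "finite T"
  shows "card {f \<in> rsubsets n r. T \<subseteq> f} \<le> (n - card T) choose (r - card T)"
proof (cases "T \<subseteq> {1..n}")
  case False
  then have "{f \<in> rsubsets n r. T \<subseteq> f} = {}" unfolding rsubsets_def by auto
  then show ?thesis by (simp only: card.empty zero_le)
next
  case True
  let ?B = "{B. B \<subseteq> {1..n} - T \<and> card B = r - card T}"
  have "(\<lambda>f. f - T) ` {f \<in> rsubsets n r. T \<subseteq> f} \<subseteq> ?B"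
    using assms by (auto simp: card_Diff_subset dest!: rsubsetsD)
  moreover have "inj_on (\<lambda>f. f - T) {f \<in> rsubsets n r. T \<subseteq> f}"
    by (rule inj_onI) blast
  ultimately have "card {f \<in> rsubsets n r. T \<subseteq> f} \<le> card ?B"
    by (intro card_inj_on_le) auto
  also have "card ?B = (n - card T) choose (r - card T)"
    using n_subsets[of "{1..n} - T" "r - card T"] True assms by (simp add: card_Diff_subset)
  finally show ?thesis .
qed

lemma card_rsubsets_meeting_le:
  assumes "finite S"
  shows "card {f \<in> rsubsets n r. t \<le> card (f \<inter> S)} \<le> (card S choose t) * ((n - t) choose (r - t))"
proof -
  let ?I = "{T. T \<subseteq> S \<and> card T = t}"
  have fin: "finite ?I" using assms by auto
  have "{f \<in> rsubsets n r. t \<le> card (f \<inter> S)} \<subseteq> (\<Union>T\<in>?I. {f \<in> rsubsets n r. T \<subseteq> f})"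
  proof clarify
    fix f assume "f \<in> rsubsets n r" "t \<le> card (f \<inter> S)"
    then obtain T where "T \<subseteq> f \<inter> S" "card T = t" by (metis obtain_subset_with_card_n)
    then show "f \<in> (\<Union>T\<in>?I. {f \<in> rsubsets n r. T \<subseteq> f})" using \<open>f \<in> rsubsets n r\<close> by auto
  qed
  then have "card {f \<in> rsubsets n r. t \<le> card (f \<inter> S)}
      \<le> card (\<Union>T\<in>?I. {f \<in> rsubsets n r. T \<subseteq> f})"
    by (intro card_mono) (simp_all add: finite_rsubsets fin)
  also have "\<dots> \<le> (\<Sum>T\<in>?I. card {f \<in> rsubsets n r. T \<subseteq> f})"
    by (rule card_UN_le[OF fin])
  also have "\<dots> \<le> (\<Sum>T\<in>?I. (n - t) choose (r - t))"
  proof (rule sum_mono)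
    fix T assume "T \<in> ?I"
    then show "card {f \<in> rsubsets n r. T \<subseteq> f} \<le> (n - t) choose (r - t)"
      using card_rsubsets_supset_le[of T n r] assms by (auto intro: finite_subset)
  qed
  also have "\<dots> = (card S choose t) * ((n - t) choose (r - t))"
    using n_subsets[OF assms, of t] by simp
  finally show ?thesis .
qed

lemma card_rsubsets_meeting_eq:
  assumes e: "e \<subseteq> {1..n}" and t: "t \<le> r"
  shows "card {f \<in> rsubsets n r. card (f \<inter> e) = t} = (card e choose t) * ((n - card e) choose (r - t))"
proof -
  let ?X = "{f \<in> rsubsets n r. card (f \<inter> e) = t}"
  let ?P = "{p. p \<subseteq> e \<and> card p = t}"
  let ?Q = "{B. B \<subseteq> {1..n} - e \<and> card B = r - t}"
  have fe: "finite e" using e by (auto intro: finite_subset)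
  have "bij_betw (\<lambda>(p, B). p \<union> B) (?P \<times> ?Q) ?X"
  proof (rule bij_betw_byWitness[where f' = "\<lambda>f. (f \<inter> e, f - e)"])
    show "\<forall>x\<in>?P \<times> ?Q. (\<lambda>f. (f \<inter> e, f - e)) ((\<lambda>(p, B). p \<union> B) x) = x" by auto
    show "\<forall>f\<in>?X. (\<lambda>(p, B). p \<union> B) (f \<inter> e, f - e) = f" by auto
    show "(\<lambda>(p, B). p \<union> B) ` (?P \<times> ?Q) \<subseteq> ?X"
    proof
      fix f assume "f \<in> (\<lambda>(p, B). p \<union> B) ` (?P \<times> ?Q)"
      then obtain p B where pB: "p \<subseteq> e" "B \<subseteq> {1..n} - e" "card B = r - t" "card p = t"
        and f: "f = p \<union> B" by auto
      have "finite p" "finite B" using pB fe finite_subset[of B "{1..n}"] by (auto dest: finite_subset)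
      then have "card (p \<union> B) = r" using pB t by (subst card_Un_disjoint) auto
      moreover have "(p \<union> B) \<inter> e = p" using pB by blast
      ultimately show "f \<in> ?X" using pB e f unfolding rsubsets_def by auto
    qed
    show "(\<lambda>f. (f \<inter> e, f - e)) ` ?X \<subseteq> ?P \<times> ?Q"
    proof
      fix x assume "x \<in> (\<lambda>f. (f \<inter> e, f - e)) ` ?X"
      then obtain f where f: "f \<in> rsubsets n r" "card (f \<inter> e) = t" "x = (f \<inter> e, f - e)" by auto
      then have "card (f - e) = r - t" by (simp add: card_Diff_subset_Int rsubsetsD)
      then show "x \<in> ?P \<times> ?Q" using f rsubsetsD[OF f(1)] by auto
    qed
  qed
  then have "card ?X = card ?P * card ?Q"
    by (simp add: bij_betw_same_card[symmetric] card_cartesian_product)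
  moreover have "card ?P = card e choose t" using n_subsets[OF fe] .
  moreover have "card ?Q = (n - card e) choose (r - t)"
    using n_subsets[of "{1..n} - e" "r - t"] e fe
    by (simp only: card_Diff_subset card_atLeastAtMost finite_Diff finite_atLeastAtMost diff_Suc_1)
  ultimately show ?thesis by simp
qed

lemma card_rsubsets_meeting_two_le:
  assumes "h \<in> rsubsets n r"
  shows "card {g \<in> rsubsets n r. 2 \<le> card (g \<inter> h)} \<le> (r choose 2) * ((n - 2) choose (r - 2))"
  using card_rsubsets_meeting_le[of h n r 2] rsubsetsD[OF assms] by simp

lemma Estar_subset_rsubsets: "Estar r n e \<subseteq> rsubsets n r"
  unfolding Estar_def by auto

lemma finite_Estar: "finite (Estar r n e)"
  using finite_subset[OF Estar_subset_rsubsets finite_rsubsets] .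

lemma self_in_Estar: "e \<in> rsubsets n r \<Longrightarrow> 2 \<le> r \<Longrightarrow> e \<in> Estar r n e"
  unfolding Estar_def by (auto dest: rsubsetsD)

lemma card_Estar_le:
  assumes "e \<in> rsubsets n r"
  shows "card (Estar r n e) \<le> (r choose 2) * ((n - 2) choose (r - 2))"
proof -
  have "Estar r n e = {f \<in> rsubsets n r. 2 \<le> card (f \<inter> e)}" unfolding Estar_def by auto
  then show ?thesis using card_rsubsets_meeting_two_le[OF assms] by (simp add: Int_commute)
qed

lemma card_Estar_bounds:
  assumes e: "e \<in> rsubsets n r" and r: "2 \<le> r"
  shows "(r choose 2) * ((n - r) choose (r - 2)) \<le> card (Estar r n e)"
    and "card (Estar r n e) \<le> (r choose 2) * ((n - r) choose (r - 2)) + (r choose 3) * ((n - 3) choose (r - 3))"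
proof -
  have fe: "finite e" "card e = r" "e \<subseteq> {1..n}" using rsubsetsD[OF e] by auto
  let ?two = "{f \<in> rsubsets n r. card (f \<inter> e) = 2}"
  let ?three = "{f \<in> rsubsets n r. 3 \<le> card (f \<inter> e)}"
  have two: "card ?two = (r choose 2) * ((n - r) choose (r - 2))"
    using card_rsubsets_meeting_eq[OF fe(3) r] fe(2) by simp
  have "card ?two \<le> card (Estar r n e)"
    by (rule card_mono[OF finite_Estar]) (auto simp: Estar_def)
  with two show "(r choose 2) * ((n - r) choose (r - 2)) \<le> card (Estar r n e)" by simp
  have "Estar r n e \<subseteq> ?two \<union> ?three" unfolding Estar_def by auto
  then have "card (Estar r n e) \<le> card (?two \<union> ?three)"
    by (intro card_mono) (simp_all add: finite_rsubsets)
  also have "\<dots> \<le> card ?two + card ?three" by (rule card_Un_le)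
  also have "\<dots> \<le> (r choose 2) * ((n - r) choose (r - 2)) + (r choose 3) * ((n - 3) choose (r - 3))"
    using two card_rsubsets_meeting_le[OF fe(1), of n r 3] fe(2) by simp
  finally show "card (Estar r n e) \<le> (r choose 2) * ((n - r) choose (r - 2)) + (r choose 3) * ((n - 3) choose (r - 3))" .
qed

text \<open>A member of \<open>E\<^sup>*\<close> meeting an edge \<open>h\<close> with \<open>|h \<inter> e| \<le> 1\<close> in two vertices meets \<open>e \<union> h\<close>
  in at least three.\<close>
lemma card_Estar_meeting_two_le:
  assumes e: "e \<in> rsubsets n r" and h: "h \<in> rsubsets n r" "card (h \<inter> e) \<le> 1"
  shows "card {f \<in> Estar r n e. 2 \<le> card (f \<inter> h)} \<le> (2 * r) ^ 3 * ((n - 3) choose (r - 3))"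
proof -
  have fin: "finite (e \<union> h)" using rsubsetsD[OF e] rsubsetsD[OF h(1)] by auto
  have "{f \<in> Estar r n e. 2 \<le> card (f \<inter> h)} \<subseteq> {f \<in> rsubsets n r. 3 \<le> card (f \<inter> (e \<union> h))}"
  proof clarify
    fix f assume f: "f \<in> Estar r n e" "2 \<le> card (f \<inter> h)"
    have fr: "f \<in> rsubsets n r" "2 \<le> card (f \<inter> e)" using f(1) unfolding Estar_def by auto
    have "card (f \<inter> e) + card (f \<inter> h) = card (f \<inter> (e \<union> h)) + card (f \<inter> e \<inter> (f \<inter> h))"
      using card_Un_Int[of "f \<inter> e" "f \<inter> h"] fin by (simp add: Int_Un_distrib)
    moreover have "card (f \<inter> e \<inter> (f \<inter> h)) \<le> card (h \<inter> e)"
      using rsubsetsD[OF h(1)] by (intro card_mono) auto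
    ultimately have "3 \<le> card (f \<inter> (e \<union> h))" using fr f(2) h(2) by linarith
    with fr show "f \<in> rsubsets n r \<and> 3 \<le> card (f \<inter> (e \<union> h))" by simp
  qed
  then have "card {f \<in> Estar r n e. 2 \<le> card (f \<inter> h)} \<le> card {f \<in> rsubsets n r. 3 \<le> card (f \<inter> (e \<union> h))}"
    by (rule card_mono[OF finite_subset[OF _ finite_rsubsets], rotated]) auto
  also have "\<dots> \<le> (card (e \<union> h) choose 3) * ((n - 3) choose (r - 3))"
    by (rule card_rsubsets_meeting_le[OF fin])
  also have "\<dots> \<le> (2 * r) ^ 3 * ((n - 3) choose (r - 3))"
  proof -
    have "card (e \<union> h) \<le> 2 * r" using card_Un_le[of e h] rsubsetsD[OF e] rsubsetsD[OF h(1)] by simp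
    then have "card (e \<union> h) choose 3 \<le> (2 * r) ^ 3"
      using choose_le_pow[of "card (e \<union> h)" 3] power_mono[of _ _ 3] by (meson le_trans zero_le)
    then show ?thesis by simp
  qed
  finally show ?thesis .
qed

section \<open>Switchings\<close>

lemma LinD: "H \<in> Lin r n m \<Longrightarrow> H \<subseteq> rsubsets n r \<and> finite H \<and> card H = m
   \<and> (\<forall>x\<in>H. \<forall>y\<in>H. x \<noteq> y \<longrightarrow> card (x \<inter> y) \<le> 1)"
  unfolding Lin_def linear_rgraph_def using finite_subset[OF _ finite_rsubsets] by auto

lemma Lin_switch:
  assumes H: "H \<in> Lin r n m" and r: "2 \<le> r" and f: "f \<in> H" and g: "g \<in> rsubsets n r"
    and gH: "\<forall>h\<in>H - {f}. card (g \<inter> h) \<le> 1"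
  shows "insert g (H - {f}) \<in> Lin r n m" and "g \<notin> H - {f}"
proof -
  have P: "H \<subseteq> rsubsets n r" "finite H" "card H = m" "\<forall>x\<in>H. \<forall>y\<in>H. x \<noteq> y \<longrightarrow> card (x \<inter> y) \<le> 1"
    using LinD[OF H] by auto
  show gn: "g \<notin> H - {f}"
  proof
    assume "g \<in> H - {f}"
    then have "card (g \<inter> g) \<le> 1" using gH by blast
    then show False using rsubsetsD[OF g] r by simp
  qed
  have "0 < m" using P f card_gt_0_iff by blast
  then have "card (insert g (H - {f})) = m" using gn P f by (simp add: card_Diff_singleton)
  moreover have "linear_rgraph n r (insert g (H - {f}))"
    unfolding linear_rgraph_def using P g gH by (auto simp: Int_commute)
  ultimately show "insert g (H - {f}) \<in> Lin r n m" unfolding Lin_def by auto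
qed

lemma inj_on_switch:
  "inj_on (\<lambda>(H, x, y). (insert y (H - {x}), y, x)) {(H, x, y). x \<in> H \<and> y \<notin> H}"
proof (rule inj_onI)
  fix a b assume "a \<in> {(H, x, y). x \<in> H \<and> y \<notin> H}" "b \<in> {(H, x, y). x \<in> H \<and> y \<notin> H}"
    and eq: "(\<lambda>(H, x, y). (insert y (H - {x}), y, x)) a = (\<lambda>(H, x, y). (insert y (H - {x}), y, x)) b"
  then obtain H H' x y where ab: "a = (H, x, y)" "b = (H', x, y)"
    and "x \<in> H" "y \<notin> H" "x \<in> H'" "y \<notin> H'" "insert y (H - {x}) = insert y (H' - {x})"
    by (cases a, cases b) auto
  then have "insert x (insert y (H - {x}) - {y}) = insert x (insert y (H' - {x}) - {y})" by simp
  then show "a = b" using ab \<open>x \<in> H\<close> \<open>y \<notin> H\<close> \<open>x \<in> H'\<close> \<open>y \<notin> H'\<close> by auto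
qed

lemma double_counting_le:
  fixes D :: real
  assumes A: "finite A" "\<forall>a\<in>A. finite (S a)" "\<forall>a\<in>A. D \<le> real (card (S a))"
    and \<phi>: "inj_on \<phi> (Sigma A S)" "\<phi> ` Sigma A S \<subseteq> T" and T: "finite T"
  shows "real (card A) * D \<le> real (card T)"
proof -
  have "real (card A) * D = (\<Sum>a\<in>A. D)" by simp
  also have "\<dots> \<le> (\<Sum>a\<in>A. real (card (S a)))" using A(3) by (intro sum_mono) auto
  also have "\<dots> = real (card (Sigma A S))" using A by (simp add: card_SigmaI)
  also have "\<dots> \<le> real (card T)" using card_inj_on_le[OF \<phi> T] by simp
  finally show ?thesis .
qed

lemma card_Diff_UN_ge:
  assumes "finite U" "finite I" "finite X" "\<forall>i\<in>I. finite (B i)" "\<forall>i\<in>I. card (B i) \<le> b"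
  shows "real (card U) - (real (card X) + real (card I) * real b)
    \<le> real (card (U - (X \<union> (\<Union>i\<in>I. B i))))"
proof -
  have "card (\<Union>i\<in>I. B i) \<le> (\<Sum>i\<in>I. card (B i))" by (rule card_UN_le[OF assms(2)])
  also have "\<dots> \<le> card I * b" using sum_mono[of I _ "\<lambda>_. b"] assms(5) by simp
  finally have "card (X \<union> (\<Union>i\<in>I. B i)) \<le> card X + card I * b"
    using card_Un_le[of X "\<Union>i\<in>I. B i"] by linarith
  moreover have "card U \<le> card (U - (X \<union> (\<Union>i\<in>I. B i))) + card (X \<union> (\<Union>i\<in>I. B i))"
    using card_Un_le[of "U - (X \<union> (\<Union>i\<in>I. B i))" "X \<union> (\<Union>i\<in>I. B i)"]
      card_mono[of "U - (X \<union> (\<Union>i\<in>I. B i)) \<union> (X \<union> (\<Union>i\<in>I. B i))" U] assms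
    by auto
  ultimately have "card U \<le> card (U - (X \<union> (\<Union>i\<in>I. B i))) + card X + card I * b" by linarith
  from of_nat_mono[OF this, where 'a = real] show ?thesis by simp
qed

text \<open>With \<open>F = {e\<^sub>1, \<dots>, e\<^sub>i\<^sub>-\<^sub>1}\<close> and \<open>e = e\<^sub>i\<close>, \<open>cond_graphs\<close> is \<open>\<L>\<^sub>r(n, m : e\<^sub>i)\<close>
  and \<open>hit_prob\<close> the probability in question.\<close>
locale switching =
  fixes n r m :: nat and e :: "nat set" and F :: "nat set set"
  assumes r2: "2 \<le> r" and e: "e \<in> rsubsets n r" and F: "F \<subseteq> rsubsets n r"
    and F_e: "\<forall>h\<in>F. card (h \<inter> e) \<le> 1"
begin

abbreviation cond_graphs :: "nat set set set" where
  "cond_graphs \<equiv> {H \<in> Lin r n m. F \<subseteq> H \<and> e \<notin> H}"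

lemma finite_cond_graphs: "finite cond_graphs"
  by (rule finite_subset[of _ "Pow (rsubsets n r)"]) (auto simp: finite_rsubsets dest!: LinD)

lemma F_disjoint_Estar: "F \<inter> Estar r n e = {}"
  using F_e unfolding Estar_def by (fastforce simp: Int_commute)

lemma card_Diff_F: "H \<in> cond_graphs \<Longrightarrow> card (H - F) = m - card F"
  using LinD[of H r n m] finite_subset[OF F finite_rsubsets] by (simp add: card_Diff_subset)

definition switch_out :: "nat set set \<Rightarrow> nat set \<Rightarrow> nat set set" where
  "switch_out H f = {g \<in> rsubsets n r. g \<notin> Estar r n e \<and> (\<forall>h\<in>H - {f}. card (g \<inter> h) \<le> 1)}"

definition switch_in :: "nat set set \<Rightarrow> nat set \<Rightarrow> nat set set" where
  "switch_in H g = {f \<in> Estar r n e. f \<noteq> e \<and> (\<forall>h\<in>H - {g}. card (f \<inter> h) \<le> 1)}"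

lemma finite_switch_out: "finite (switch_out H f)"
  unfolding switch_out_def using finite_rsubsets by simp

lemma finite_switch_in: "finite (switch_in H g)"
  unfolding switch_in_def using finite_Estar by simp

lemma switch_out_result:
  assumes H: "H \<in> cond_graphs" and f: "f \<in> H" "f \<in> Estar r n e" and g: "g \<in> switch_out H f"
  shows "g \<notin> H" and "insert g (H - {f}) \<in> cond_graphs"
proof -
  have g': "g \<in> rsubsets n r" "g \<notin> Estar r n e" "\<forall>h\<in>H - {f}. card (g \<inter> h) \<le> 1"
    using g unfolding switch_out_def by auto
  have "insert g (H - {f}) \<in> Lin r n m" "g \<notin> H - {f}"
    using Lin_switch[of H r n m f g] H f g' r2 by auto
  moreover have "f \<notin> F" "g \<noteq> e" "g \<noteq> f" using F_disjoint_Estar f g' self_in_Estar[OF e r2] by auto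
  ultimately show "g \<notin> H" "insert g (H - {f}) \<in> cond_graphs" using H by auto
qed

lemma switch_in_result:
  assumes H: "H \<in> cond_graphs" "H \<inter> Estar r n e = {}" and g: "g \<in> H" "g \<notin> F" and f: "f \<in> switch_in H g"
  shows "f \<notin> H" and "insert f (H - {g}) \<in> cond_graphs" and "insert f (H - {g}) \<inter> Estar r n e = {f}"
proof -
  have f': "f \<in> Estar r n e" "f \<noteq> e" "\<forall>h\<in>H - {g}. card (f \<inter> h) \<le> 1"
    using f unfolding switch_in_def by auto
  show "f \<notin> H" using H f' by auto
  have "f \<in> rsubsets n r" using f'(1) Estar_subset_rsubsets by blast
  then have "insert f (H - {g}) \<in> Lin r n m"
    using Lin_switch(1)[of H r n m g f] H g f' r2 by blast
  then show "insert f (H - {g}) \<in> cond_graphs" using H g f' by auto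
  show "insert f (H - {g}) \<inter> Estar r n e = {f}" using H f' by auto
qed

text \<open>Removing \<open>E\<^sup>*\<close> and the \<open>\<le> m\<close> sets of edges meeting another edge of \<open>H\<close> twice
  leaves this many replacements.\<close>
lemma card_switch_out_ge:
  assumes H: "H \<in> cond_graphs"
  shows "real (n choose r) - real (m + 1) * real ((r choose 2) * ((n - 2) choose (r - 2)))
    \<le> real (card (switch_out H f))"
proof -
  let ?E = "Estar r n e" and ?P = "(r choose 2) * ((n - 2) choose (r - 2))"
  let ?B = "\<lambda>h. {g \<in> rsubsets n r. 2 \<le> card (g \<inter> h)}"
  have HP: "H \<subseteq> rsubsets n r" "finite H" "card H = m" using LinD[of H r n m] H by auto
  have "real (card (rsubsets n r)) - (real (card ?E) + real (card (H - {f})) * real ?P)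
      \<le> real (card (rsubsets n r - (?E \<union> (\<Union>h\<in>H - {f}. ?B h))))"
    by (rule card_Diff_UN_ge) (use HP card_rsubsets_meeting_two_le in \<open>auto simp: finite_rsubsets finite_Estar\<close>)
  also have "\<dots> \<le> real (card (switch_out H f))"
    unfolding switch_out_def by (intro of_nat_mono card_mono) (auto simp: finite_rsubsets)
  finally have "real (n choose r) - (real (card ?E) + real (card (H - {f})) * real ?P)
      \<le> real (card (switch_out H f))"
    by (simp only: card_rsubsets)
  moreover have "real (card ?E) \<le> real ?P" using card_Estar_le[OF e] by (simp only: of_nat_le_iff)
  moreover have "real (card (H - {f})) * real ?P \<le> real m * real ?P"
    using HP(3) card_Diff1_le[of H f] by (intro mult_right_mono) simp_all
  moreover have "real (m + 1) * real ?P = real m * real ?P + real ?P"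
    by (simp only: of_nat_Suc Suc_eq_plus1[symmetric] distrib_right mult_1)
  ultimately show ?thesis by linarith
qed

lemma card_switch_out_pairs_ge:
  assumes H: "H \<in> cond_graphs" "H \<inter> Estar r n e \<noteq> {}"
  shows "real (n choose r) - real (m + 1) * real ((r choose 2) * ((n - 2) choose (r - 2)))
    \<le> real (card (Sigma (H \<inter> Estar r n e) (switch_out H)))"
proof -
  obtain f where f: "f \<in> H \<inter> Estar r n e" using H by auto
  have "card (switch_out H f) = card ({f} \<times> switch_out H f)" by (simp add: card_cartesian_product)
  also have "\<dots> \<le> card (Sigma (H \<inter> Estar r n e) (switch_out H))"
    using f finite_switch_out finite_Estar by (intro card_mono) auto
  finally show ?thesis using card_switch_out_ge[OF H(1), of f] by simp
qed

text \<open>Double counting the switchings that replace \<open>f \<in> H \<inter> E\<^sup>*\<close> by \<open>g \<in> switch_out H f\<close>.\<close>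
lemma switch_upper:
  "real (card {H \<in> cond_graphs. H \<inter> Estar r n e \<noteq> {}})
     * (real (n choose r) - real (m + 1) * real ((r choose 2) * ((n - 2) choose (r - 2))))
   \<le> real (card cond_graphs) * real (m - card F) * real (card (Estar r n e))"
proof -
  let ?E = "Estar r n e" and ?P = "(r choose 2) * ((n - 2) choose (r - 2))"
  let ?A = "{H \<in> cond_graphs. H \<inter> ?E \<noteq> {}}"
  let ?S = "\<lambda>H. Sigma (H \<inter> ?E) (switch_out H)"
  let ?T = "Sigma cond_graphs (\<lambda>H'. (H' - F) \<times> ?E)"
  let ?\<phi> = "\<lambda>(H, x, y). (insert y (H - {x}), y, x)"
  have "real (card ?A) * (real (n choose r) - real (m + 1) * real ?P) \<le> real (card ?T)"
  proof (rule double_counting_le[where \<phi> = ?\<phi>])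
    show "finite ?A" using finite_cond_graphs by (rule finite_subset[rotated]) auto
    show "\<forall>H\<in>?A. finite (?S H)" using finite_switch_out by (auto dest!: LinD)
    show "\<forall>H\<in>?A. real (n choose r) - real (m + 1) * real ?P \<le> real (card (?S H))"
      using card_switch_out_pairs_ge by blast
    have "Sigma ?A ?S \<subseteq> {(H, x, y). x \<in> H \<and> y \<notin> H}" using switch_out_result(1) by blast
    then show "inj_on ?\<phi> (Sigma ?A ?S)" by (rule inj_on_subset[OF inj_on_switch])
    show "?\<phi> ` Sigma ?A ?S \<subseteq> ?T"
    proof
      fix t assume "t \<in> ?\<phi> ` Sigma ?A ?S"
      then obtain H f g where "t = ?\<phi> (H, f, g)" "H \<in> ?A" "f \<in> H \<inter> ?E" "g \<in> switch_out H f" by blast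
      then show "t \<in> ?T" using switch_out_result[of H f g] by auto
    qed
    show "finite ?T" using finite_cond_graphs finite_Estar by (intro finite_SigmaI) (auto dest: LinD)
  qed
  also have "card ?T = (\<Sum>H\<in>cond_graphs. card ((H - F) \<times> ?E))"
    using finite_cond_graphs finite_Estar by (intro card_SigmaI) (auto dest: LinD)
  also have "\<dots> = card cond_graphs * (m - card F) * card ?E"
    by (simp add: card_cartesian_product card_Diff_F)
  finally show ?thesis by simp
qed

lemma card_switch_in_ge:
  assumes H: "H \<in> cond_graphs" "H \<inter> Estar r n e = {}"
  shows "real (card (Estar r n e)) - 1 - real m * real ((2 * r) ^ 3 * ((n - 3) choose (r - 3)))
    \<le> real (card (switch_in H g))"
proof -
  let ?E = "Estar r n e" and ?W = "(2 * r) ^ 3 * ((n - 3) choose (r - 3))"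
  let ?B = "\<lambda>h. {f \<in> ?E. 2 \<le> card (f \<inter> h)}"
  have HP: "H \<subseteq> rsubsets n r" "finite H" "card H = m" using LinD[of H r n m] H by auto
  have "card (?B h) \<le> ?W" if "h \<in> H - {g}" for h
  proof -
    have "h \<in> rsubsets n r" "h \<notin> ?E" using that HP H by auto
    then show ?thesis using card_Estar_meeting_two_le[OF e] unfolding Estar_def by auto
  qed
  then have "real (card ?E) - (real (card {e}) + real (card (H - {g})) * real ?W)
      \<le> real (card (?E - ({e} \<union> (\<Union>h\<in>H - {g}. ?B h))))"
    by (intro card_Diff_UN_ge) (use HP finite_Estar in auto)
  also have "\<dots> \<le> real (card (switch_in H g))"
    unfolding switch_in_def by (intro of_nat_mono card_mono) (auto simp: finite_Estar)
  finally have "real (card ?E) - (1 + real (card (H - {g})) * real ?W) \<le> real (card (switch_in H g))"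
    by simp
  moreover have "real (card (H - {g})) * real ?W \<le> real m * real ?W"
    using HP(3) card_Diff1_le[of H g] by (intro mult_right_mono) simp_all
  ultimately show ?thesis by linarith
qed

lemma card_switch_in_pairs_ge:
  assumes H: "H \<in> cond_graphs" "H \<inter> Estar r n e = {}"
  shows "real (m - card F) * (real (card (Estar r n e)) - 1 - real m * real ((2 * r) ^ 3 * ((n - 3) choose (r - 3))))
    \<le> real (card (Sigma (H - F) (switch_in H)))"
proof -
  let ?K = "real (card (Estar r n e)) - 1 - real m * real ((2 * r) ^ 3 * ((n - 3) choose (r - 3)))"
  have "real (card (H - F)) * ?K \<le> (\<Sum>g\<in>H - F. real (card (switch_in H g)))"
    using card_switch_in_ge[OF H] sum_mono[of "H - F" "\<lambda>_. ?K"] by auto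
  also have "\<dots> = real (card (Sigma (H - F) (switch_in H)))"
    using H finite_switch_in LinD[of H r n m] by (simp add: card_SigmaI)
  finally show ?thesis using card_Diff_F[OF H(1)] by simp
qed

text \<open>Double counting the switchings that replace \<open>g \<in> H - F\<close>, for \<open>H\<close> avoiding \<open>E\<^sup>*\<close>, by
  \<open>f \<in> switch_in H g\<close>: the result meets \<open>E\<^sup>*\<close> exactly in \<open>f\<close>, and \<open>g\<close> is some \<open>r\<close>-set.\<close>
lemma switch_lower:
  "real (card {H \<in> cond_graphs. H \<inter> Estar r n e = {}})
     * (real (m - card F) * (real (card (Estar r n e)) - 1 - real m * real ((2 * r) ^ 3 * ((n - 3) choose (r - 3)))))
   \<le> real (card {H \<in> cond_graphs. card (H \<inter> Estar r n e) = 1}) * real (n choose r)"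
proof -
  let ?E = "Estar r n e" and ?W = "(2 * r) ^ 3 * ((n - 3) choose (r - 3))"
  let ?A = "{H \<in> cond_graphs. H \<inter> ?E = {}}" and ?A1 = "{H \<in> cond_graphs. card (H \<inter> ?E) = 1}"
  let ?S = "\<lambda>H. Sigma (H - F) (switch_in H)"
  let ?T = "Sigma ?A1 (\<lambda>H'. (H' \<inter> ?E) \<times> rsubsets n r)"
  let ?\<phi> = "\<lambda>(H, x, y). (insert y (H - {x}), y, x)"
  have fin_A1: "finite ?A1" using finite_cond_graphs by (rule finite_subset[rotated]) auto
  have "real (card ?A) * (real (m - card F) * (real (card ?E) - 1 - real m * real ?W)) \<le> real (card ?T)"
  proof (rule double_counting_le[where \<phi> = ?\<phi>])
    show "finite ?A" using finite_cond_graphs by (rule finite_subset[rotated]) auto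
    show "\<forall>H\<in>?A. finite (?S H)" using finite_switch_in by (auto dest!: LinD)
    show "\<forall>H\<in>?A. real (m - card F) * (real (card ?E) - 1 - real m * real ?W) \<le> real (card (?S H))"
      using card_switch_in_pairs_ge by blast
    have "Sigma ?A ?S \<subseteq> {(H, x, y). x \<in> H \<and> y \<notin> H}" using switch_in_result(1) by blast
    then show "inj_on ?\<phi> (Sigma ?A ?S)" by (rule inj_on_subset[OF inj_on_switch])
    show "?\<phi> ` Sigma ?A ?S \<subseteq> ?T"
    proof
      fix t assume "t \<in> ?\<phi> ` Sigma ?A ?S"
      then obtain H g f where "t = ?\<phi> (H, g, f)" "H \<in> ?A" "g \<in> H - F" "f \<in> switch_in H g" by blast
      then show "t \<in> ?T" using switch_in_result[of H g f] LinD[of H r n m] by auto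
    qed
    show "finite ?T" using fin_A1 finite_Estar finite_rsubsets by (intro finite_SigmaI) auto
  qed
  also have "card ?T = (\<Sum>H\<in>?A1. card ((H \<inter> ?E) \<times> rsubsets n r))"
    using fin_A1 finite_Estar finite_rsubsets by (intro card_SigmaI) auto
  also have "\<dots> = card ?A1 * (n choose r)"
    by (simp add: card_cartesian_product card_rsubsets)
  finally show ?thesis by simp
qed

definition hit_prob :: real where
  "hit_prob = real (card {H \<in> cond_graphs. H \<inter> Estar r n e \<noteq> {}}) / real (card cond_graphs)"

lemma n_choose_r_pos: "0 < n choose r"
proof -
  have "r \<le> n" using rsubsetsD[OF e] card_mono[of "{1..n}" e] by auto
  then show ?thesis by simp
qed

lemma hit_prob_upper:
  assumes "cond_graphs \<noteq> {}"
  shows "hit_prob * (1 - real (m + 1) * (real ((r choose 2) * ((n - 2) choose (r - 2))) / real (n choose r)))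
    \<le> real (m - card F) * (real (card (Estar r n e)) / real (n choose r))"
proof -
  let ?l = "real (card cond_graphs)" and ?N = "real (n choose r)"
  have pos: "0 < ?l" "0 < ?N" using assms finite_cond_graphs n_choose_r_pos by (auto simp: card_gt_0_iff)
  have "hit_prob * (1 - real (m + 1) * (real ((r choose 2) * ((n - 2) choose (r - 2))) / ?N))
      = real (card {H \<in> cond_graphs. H \<inter> Estar r n e \<noteq> {}})
        * (?N - real (m + 1) * real ((r choose 2) * ((n - 2) choose (r - 2)))) / (?l * ?N)"
    unfolding hit_prob_def using pos by (simp add: field_simps)
  also have "\<dots> \<le> ?l * real (m - card F) * real (card (Estar r n e)) / (?l * ?N)"
    using switch_upper pos by (intro divide_right_mono) simp_all
  also have "\<dots> = real (m - card F) * (real (card (Estar r n e)) / ?N)"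
    using pos by simp
  finally show ?thesis .
qed

lemma one_minus_hit_prob:
  assumes "cond_graphs \<noteq> {}"
  shows "1 - hit_prob = real (card {H \<in> cond_graphs. H \<inter> Estar r n e = {}}) / real (card cond_graphs)"
proof -
  let ?hit = "{H \<in> cond_graphs. H \<inter> Estar r n e \<noteq> {}}" and ?miss = "{H \<in> cond_graphs. H \<inter> Estar r n e = {}}"
  have fin: "finite ?hit" "finite ?miss"
    using finite_cond_graphs by (rule finite_subset[rotated], auto)+
  have "cond_graphs = ?hit \<union> ?miss" by auto
  then have "card cond_graphs = card (?hit \<union> ?miss)" by (rule arg_cong)
  also have "\<dots> = card ?hit + card ?miss" by (rule card_Un_disjoint[OF fin]) auto
  moreover have "0 < real (card cond_graphs)" using assms finite_cond_graphs by (simp add: card_gt_0_iff)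
  ultimately show ?thesis unfolding hit_prob_def by (simp add: field_simps)
qed

lemma hit_prob_lower:
  assumes "cond_graphs \<noteq> {}"
  shows "(1 - hit_prob) * (real (m - card F) * (real (card (Estar r n e)) / real (n choose r)
      - (1 + real m * real ((2 * r) ^ 3 * ((n - 3) choose (r - 3)))) / real (n choose r)))
    \<le> hit_prob"
proof -
  let ?E = "Estar r n e" and ?W = "(2 * r) ^ 3 * ((n - 3) choose (r - 3))"
  let ?l = "real (card cond_graphs)" and ?N = "real (n choose r)"
  let ?hit = "{H \<in> cond_graphs. H \<inter> ?E \<noteq> {}}" and ?miss = "{H \<in> cond_graphs. H \<inter> ?E = {}}"
  have pos: "0 < ?l" "0 < ?N" using assms finite_cond_graphs n_choose_r_pos by (auto simp: card_gt_0_iff)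
  have "card {H \<in> cond_graphs. card (H \<inter> ?E) = 1} \<le> card ?hit"
    using finite_cond_graphs by (rule card_mono[OF finite_subset[rotated]]) auto
  then have "real (card {H \<in> cond_graphs. card (H \<inter> ?E) = 1}) * ?N \<le> real (card ?hit) * ?N"
    using pos by (intro mult_right_mono) simp_all
  with switch_lower have "real (card ?miss) * (real (m - card F) * (real (card ?E) - 1 - real m * real ?W))
      \<le> real (card ?hit) * ?N"
    by linarith
  moreover have "a / ?l * (x / ?N) \<le> b / ?l" if "a * x \<le> b * ?N" for a x b
  proof -
    have "a * x / (?l * ?N) \<le> b * ?N / (?l * ?N)" using that pos by (intro divide_right_mono) simp_all
    then show ?thesis using pos by simp
  qed
  ultimately have "real (card ?miss) / ?l * (real (m - card F) * (real (card ?E) - 1 - real m * real ?W) / ?N)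
      \<le> real (card ?hit) / ?l"
    by (simp only: times_divide_eq_right)
  moreover have "real (card ?E) / ?N - (1 + real m * real ?W) / ?N = (real (card ?E) - 1 - real m * real ?W) / ?N"
    by (simp add: diff_divide_distrib add_divide_distrib)
  ultimately show ?thesis unfolding one_minus_hit_prob[OF assms] hit_prob_def[symmetric] by simp
qed

end

section \<open>Estimates\<close>

text \<open>Here \<open>p\<close> is the hitting probability, \<open>M\<close> the number of free edges, \<open>\<epsilon>\<close> the normalised size
  of \<open>E\<^sup>*\<close> with main term \<open>\<mu>\<close>, and \<open>\<delta>\<close> the loss in the reverse switching.\<close>
lemma switching_estimate:
  fixes p m M q \<mu> \<epsilon> \<pi> \<delta> :: real
  assumes p: "0 \<le> p" and m: "1 \<le> m" "0 \<le> M" "M \<le> m"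
    and \<epsilon>: "0 \<le> \<mu>" "\<mu> \<le> \<epsilon>" "\<epsilon> \<le> \<mu> + \<pi>" "\<epsilon> \<le> q" and mq: "m * q \<le> 1/4" and \<delta>: "0 \<le> \<delta>"
    and upper: "p * (1 - (m + 1) * q) \<le> M * \<epsilon>"
    and lower: "(1 - p) * (M * (\<epsilon> - \<delta>)) \<le> p"
  shows "\<bar>p - M * \<mu>\<bar> \<le> m * (\<pi> + \<delta>) + 4 * (m * q)^2"
proof -
  have q: "0 \<le> q" using \<epsilon> by linarith
  then have "q \<le> m * q" using m mult_right_mono[of 1 m q] by simp
  then have q2: "(m + 1) * q \<le> 2 * (m * q)" by (simp add: algebra_simps)
  have M\<epsilon>: "0 \<le> M * \<epsilon>" "M * \<epsilon> \<le> m * q" using m \<epsilon> by (auto intro: mult_mono)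
  have "p * (1 / 2) \<le> p * (1 - (m + 1) * q)" using p q2 mq by (intro mult_left_mono) auto
  then have p_le: "p \<le> 2 * (M * \<epsilon>)" using upper by linarith
  have "p * ((m + 1) * q) \<le> (2 * (M * \<epsilon>)) * (2 * (m * q))"
    by (rule mult_mono[OF p_le q2]) (use M\<epsilon> q m in auto)
  also have "\<dots> \<le> (2 * (m * q)) * (2 * (m * q))" using M\<epsilon> q m by (intro mult_right_mono) auto
  finally have "p * ((m + 1) * q) \<le> 4 * (m * q)^2" by (simp add: power2_eq_square)
  moreover have "M * (\<epsilon> - \<mu>) \<le> m * \<pi>" using m \<epsilon> by (intro mult_mono) auto
  ultimately have up: "p - M * \<mu> \<le> m * \<pi> + 4 * (m * q)^2"
    using upper by (simp add: algebra_simps)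
  have "M * (\<epsilon> - \<delta>) \<le> M * \<epsilon>" using m \<delta> by (simp add: mult_left_mono)
  then have "p * (M * (\<epsilon> - \<delta>)) \<le> p * (M * \<epsilon>)" using p by (rule mult_left_mono)
  also have "\<dots> \<le> (2 * (M * \<epsilon>)) * (M * \<epsilon>)" using p_le M\<epsilon>(1) by (rule mult_right_mono)
  also have "\<dots> \<le> (2 * (m * q)) * (m * q)" by (rule mult_mono) (use M\<epsilon> in auto)
  finally have "p * (M * (\<epsilon> - \<delta>)) \<le> 2 * (m * q)^2" by (simp add: power2_eq_square)
  moreover have "M * \<delta> \<le> m * \<delta>" using m \<delta> by (intro mult_right_mono)
  moreover have "M * \<mu> \<le> M * \<epsilon>" using m \<epsilon> by (intro mult_left_mono)
  ultimately have low: "M * \<mu> - p \<le> m * \<delta> + 2 * (m * q)^2"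
    using lower by (simp add: algebra_simps)
  have "0 \<le> m * \<pi>" "0 \<le> m * \<delta>" "0 \<le> (m * q)^2" using m \<epsilon> \<delta> by auto
  with up low show ?thesis unfolding abs_le_iff distrib_left by linarith
qed

lemma choose_ratio_le:
  assumes "t \<le> r" "r \<le> n"
  shows "real ((n - t) choose (r - t)) / real (n choose r) \<le> real r ^ t * (real t / real n) ^ t"
proof (cases "t = 0")
  case True
  then show ?thesis using assms by simp
next
  case False
  then have n: "0 < real n" using assms by simp
  have "real (n choose r) * real (r choose t) = real (n choose t) * real ((n - t) choose (r - t))"
    using choose_mult[OF assms] by (metis of_nat_mult)
  moreover have "(real n / real t) ^ t \<le> real (n choose t)"
    using binomial_ge_n_over_k_pow_k[of t n] assms by simp
  moreover have "0 < (real n / real t) ^ t" using n False by simp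
  ultimately have "real ((n - t) choose (r - t)) / real (n choose r) = real (r choose t) / real (n choose t)"
    using assms by (simp add: field_simps)
  also have "\<dots> \<le> real r ^ t / (real n / real t) ^ t"
    using choose_le_pow[of r t] \<open>(real n / real t) ^ t \<le> _\<close> \<open>0 < (real n / real t) ^ t\<close>
    by (intro frac_le) (simp_all add: of_nat_mono[of "r choose t" "r ^ t", simplified])
  also have "\<dots> = real r ^ t * (real t / real n) ^ t" using n False by (simp add: power_divide)
  finally show ?thesis .
qed

lemma r_squared_le_n:
  assumes m: "1 \<le> m" and small: "real m ^ 2 * real r ^ 6 \<le> real n ^ 3 / 256"
  shows "real r ^ 2 \<le> real n"
proof -
  have "1 \<le> real m ^ 2" using m by simp
  then have "real r ^ 6 \<le> real m ^ 2 * real r ^ 6" by (simp add: mult_le_cancel_right1)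
  moreover have "0 \<le> real n ^ 3" by simp
  ultimately have "real r ^ 6 \<le> real n ^ 3" using small by linarith
  then have "(real r ^ 2) ^ 3 \<le> real n ^ 3" by (simp add: power_mult[symmetric])
  then show ?thesis using power_le_imp_le_base[of "real r ^ 2" 2 "real n"] by (simp add: numeral_3_eq_3)
qed

lemma binomial_ratios_le:
  assumes r: "3 \<le> r" and rn: "r \<le> n"
  shows "real ((r choose 2) * ((n - 2) choose (r - 2))) / real (n choose r) \<le> 4 * real r ^ 4 / real n ^ 2"
    and "real ((r choose 3) * ((n - 3) choose (r - 3))) / real (n choose r) \<le> 27 * (real r ^ 6 / real n ^ 3)"
    and "real ((2 * r) ^ 3 * ((n - 3) choose (r - 3))) / real (n choose r) \<le> 216 * (real r ^ 6 / real n ^ 3)"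
    and "1 / real (n choose r) \<le> 27 * (real r ^ 6 / real n ^ 3)"
proof -
  have n: "0 < real n" using rn r by simp
  have ratio3: "real ((n - 3) choose (r - 3)) / real (n choose r) \<le> 27 * (real r ^ 3 / real n ^ 3)"
    using choose_ratio_le[of 3 r n] r rn by (simp add: power_divide mult.commute)
  have "real ((r choose 2) * ((n - 2) choose (r - 2))) / real (n choose r)
      = real (r choose 2) * (real ((n - 2) choose (r - 2)) / real (n choose r))"
    by simp
  also have "\<dots> \<le> real r ^ 2 * (real r ^ 2 * (2 / real n) ^ 2)"
    using choose_ratio_le[of 2 r n] r rn choose_le_pow[of r 2]
    by (intro mult_mono) (simp_all add: of_nat_mono[of "r choose 2" "r ^ 2", simplified])
  also have "\<dots> = 4 * real r ^ 4 / real n ^ 2" by (simp add: power_divide flip: power_add)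
  finally show "real ((r choose 2) * ((n - 2) choose (r - 2))) / real (n choose r) \<le> 4 * real r ^ 4 / real n ^ 2" .
  have "real ((r choose 3) * ((n - 3) choose (r - 3))) / real (n choose r)
      = real (r choose 3) * (real ((n - 3) choose (r - 3)) / real (n choose r))"
    by simp
  also have "\<dots> \<le> real r ^ 3 * (27 * (real r ^ 3 / real n ^ 3))"
    using ratio3 choose_le_pow[of r 3]
    by (intro mult_mono) (simp_all add: of_nat_mono[of "r choose 3" "r ^ 3", simplified])
  also have "\<dots> = 27 * (real r ^ 6 / real n ^ 3)" by (simp add: eval_nat_numeral)
  finally show "real ((r choose 3) * ((n - 3) choose (r - 3))) / real (n choose r) \<le> 27 * (real r ^ 6 / real n ^ 3)" .
  have "real ((2 * r) ^ 3 * ((n - 3) choose (r - 3))) / real (n choose r)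
      = 8 * real r ^ 3 * (real ((n - 3) choose (r - 3)) / real (n choose r))"
    by simp
  also have "\<dots> \<le> 8 * real r ^ 3 * (27 * (real r ^ 3 / real n ^ 3))"
    using ratio3 by (intro mult_left_mono) simp_all
  also have "\<dots> = 216 * (real r ^ 6 / real n ^ 3)" by (simp add: eval_nat_numeral)
  finally show "real ((2 * r) ^ 3 * ((n - 3) choose (r - 3))) / real (n choose r) \<le> 216 * (real r ^ 6 / real n ^ 3)" .
  have "1 / real (n choose r) \<le> real ((n - 3) choose (r - 3)) / real (n choose r)"
    using rn r by (intro divide_right_mono) (simp_all add: Suc_le_eq)
  moreover have "real r ^ 3 / real n ^ 3 \<le> real r ^ 6 / real n ^ 3"
    using r n by (intro divide_right_mono power_increasing) auto
  ultimately show "1 / real (n choose r) \<le> 27 * (real r ^ 6 / real n ^ 3)" using ratio3 by linarith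
qed

lemma switching_error_terms:
  fixes n r m :: nat
  assumes r: "3 \<le> r" and m: "1 \<le> m" and small: "real m ^ 2 * real r ^ 6 \<le> real n ^ 3 / 256"
  defines "q \<equiv> real ((r choose 2) * ((n - 2) choose (r - 2))) / real (n choose r)"
    and "\<pi> \<equiv> real ((r choose 3) * ((n - 3) choose (r - 3))) / real (n choose r)"
    and "\<delta> \<equiv> (1 + real m * real ((2 * r) ^ 3 * ((n - 3) choose (r - 3)))) / real (n choose r)"
  shows "real m * q \<le> 1 / 4"
    and "real m * (\<pi> + \<delta>) + 4 * (real m * q) ^ 2 \<le> 400 * (real r ^ 6 * real m ^ 2 / real n ^ 3)"
proof -
  define v where "v = real r ^ 6 / real n ^ 3"
  have rn2: "real r ^ 2 \<le> real n" using r_squared_le_n[OF m small] .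
  moreover have "real r \<le> real r ^ 2" using r by (simp add: power2_eq_square)
  ultimately have rn: "r \<le> n" by linarith
  have n: "0 < real n" using rn r by simp
  have v0: "0 \<le> v" unfolding v_def by simp
  have mv: "real m ^ 2 * v \<le> 1 / 256" using small n unfolding v_def by (simp add: field_simps)
  note ratios = binomial_ratios_le[OF r rn, folded v_def]
  have "(real m * q) ^ 2 \<le> (real m * (4 * real r ^ 4 / real n ^ 2)) ^ 2"
    using ratios(1) m by (intro power_mono mult_left_mono) (simp_all add: q_def)
  also have "\<dots> = 16 * (real m ^ 2 * v) * (real r ^ 2 / real n)"
    unfolding v_def using n by (simp add: field_simps eval_nat_numeral)
  also have "\<dots> \<le> 16 * (real m ^ 2 * v)"
    by (rule mult_left_le) (use rn2 n in \<open>simp_all add: v_def\<close>)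
  finally have mq2: "(real m * q) ^ 2 \<le> 16 * (real m ^ 2 * v)" .
  with mv have "(real m * q) ^ 2 \<le> (1 / 4) ^ 2" by (simp add: power_divide)
  then show "real m * q \<le> 1 / 4" by (rule power2_le_imp_le) simp
  have "real m * (real ((2 * r) ^ 3 * ((n - 3) choose (r - 3))) / real (n choose r)) \<le> real m * (216 * v)"
    using ratios(3) by (intro mult_left_mono) simp_all
  with ratios(4) have \<delta>: "\<delta> \<le> 27 * v + real m * (216 * v)"
    unfolding \<delta>_def add_divide_distrib times_divide_eq_right by linarith
  have "real m * (\<pi> + \<delta>) \<le> real m * (54 * v + real m * (216 * v))"
    using ratios(2) \<delta> unfolding \<pi>_def by (intro mult_left_mono) simp_all
  also have "\<dots> = 54 * (real m * v) + 216 * (real m ^ 2 * v)" by (simp add: algebra_simps power2_eq_square)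
  also have "real m * v \<le> real m ^ 2 * v"
    using m unfolding v_def by (intro mult_right_mono) (simp_all add: power2_eq_square)
  finally have "real m * (\<pi> + \<delta>) \<le> 270 * (real m ^ 2 * v)" by (simp add: ac_simps)
  moreover have "400 * (real r ^ 6 * real m ^ 2 / real n ^ 3) = 400 * (real m ^ 2 * v)"
    unfolding v_def by simp
  ultimately show "real m * (\<pi> + \<delta>) + 4 * (real m * q) ^ 2 \<le> 400 * (real r ^ 6 * real m ^ 2 / real n ^ 3)"
    using mq2 mult_nonneg_nonneg[OF _ v0, of "real m ^ 2"] by simp
qed

context switching
begin

lemma hit_prob_estimate:
  assumes r: "3 \<le> r" and m: "1 \<le> m" and small: "real m ^ 2 * real r ^ 6 \<le> real n ^ 3 / 256"
    and ne: "cond_graphs \<noteq> {}"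
  shows "\<bar>hit_prob - real (m - card F) * (real ((r choose 2) * ((n - r) choose (r - 2))) / real (n choose r))\<bar>
    \<le> 400 * (real r ^ 6 * real m ^ 2 / real n ^ 3)"
proof -
  let ?N = "real (n choose r)"
  let ?\<mu> = "real ((r choose 2) * ((n - r) choose (r - 2))) / ?N"
  let ?q = "real ((r choose 2) * ((n - 2) choose (r - 2))) / ?N"
    and ?\<pi> = "real ((r choose 3) * ((n - 3) choose (r - 3))) / ?N"
    and ?\<delta> = "(1 + real m * real ((2 * r) ^ 3 * ((n - 3) choose (r - 3)))) / ?N"
  have "\<bar>hit_prob - real (m - card F) * ?\<mu>\<bar> \<le> real m * (?\<pi> + ?\<delta>) + 4 * (real m * ?q) ^ 2"
  proof (rule switching_estimate)
    show "0 \<le> hit_prob" unfolding hit_prob_def by simp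
    show "1 \<le> real m" "0 \<le> real (m - card F)" "real (m - card F) \<le> real m" using m by auto
    show "0 \<le> ?\<mu>" by simp
    show "?\<mu> \<le> real (card (Estar r n e)) / ?N"
      using of_nat_mono[OF card_Estar_bounds(1)[OF e r2], where 'a = real] by (intro divide_right_mono) simp_all
    show "real (card (Estar r n e)) / ?N \<le> ?\<mu> + ?\<pi>"
      using of_nat_mono[OF card_Estar_bounds(2)[OF e r2], where 'a = real]
      by (simp add: add_divide_distrib[symmetric] divide_right_mono)
    show "real (card (Estar r n e)) / ?N \<le> ?q"
      using of_nat_mono[OF card_Estar_le[OF e], where 'a = real] by (simp add: divide_right_mono)
    show "real m * ?q \<le> 1 / 4" using switching_error_terms(1)[OF r m small] .
    show "0 \<le> ?\<delta>" by simp
    show "hit_prob * (1 - (real m + 1) * ?q) \<le> real (m - card F) * (real (card (Estar r n e)) / ?N)"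
      using hit_prob_upper[OF ne] by (simp add: add.commute)
    show "(1 - hit_prob) * (real (m - card F) * (real (card (Estar r n e)) / ?N - ?\<delta>)) \<le> hit_prob"
      using hit_prob_lower[OF ne] by simp
  qed
  also have "\<dots> \<le> 400 * (real r ^ 6 * real m ^ 2 / real n ^ 3)"
    using switching_error_terms(2)[OF r m small] .
  finally show ?thesis .
qed

end

lemma switching_prefix:
  assumes r: "2 \<le> r" and es: "distinct es" "linear_rgraph n r (set es)" and i: "i < length es"
  shows "switching n r (es ! i) (set (take i es))"
proof
  show "2 \<le> r" by (fact r)
  show "es ! i \<in> rsubsets n r" "set (take i es) \<subseteq> rsubsets n r"
    using es(2) i set_take_subset[of i es] unfolding linear_rgraph_def by auto
  show "\<forall>h\<in>set (take i es). card (h \<inter> es ! i) \<le> 1"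
  proof
    fix h assume "h \<in> set (take i es)"
    then obtain j where "j < i" "h = es ! j" using i by (auto simp: nth_image[symmetric])
    then have "h \<noteq> es ! i" "h \<in> set es" "es ! i \<in> set es"
      using es(1) i by (auto simp: nth_eq_iff_index_eq)
    then show "card (h \<inter> es ! i) \<le> 1" using es(2) unfolding linear_rgraph_def by auto
  qed
qed

lemma prob_hit_estimate:
  fixes n r m k i :: nat and es :: "nat set list"
  assumes r: "3 \<le> r" and km: "1 \<le> k" "k \<le> m" and small: "real m ^ 2 * real r ^ 6 \<le> real n ^ 3 / 256"
    and es: "length es = k" "distinct es" "linear_rgraph n r (set es)"
    and i: "1 \<le> i" "i \<le> k" and ne: "Lin_bar r n m es i \<noteq> {}"
  shows "\<bar>prob_hit r n m es i
      - real (m - i + 1) * real (r choose 2) * real ((n - r) choose (r - 2)) / real (n choose r)\<bar>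
    \<le> 400 * (real r ^ 6 * real m ^ 2 / real n ^ 3)"
proof -
  have ilt: "i - 1 < length es" using i es by simp
  interpret switching n r m "es ! (i - 1)" "set (take (i - 1) es)"
    using switching_prefix[OF _ es(2,3) ilt] r by simp
  have Lin_bar: "Lin_bar r n m es i = cond_graphs"
    unfolding Lin_bar_def using ilt by (auto simp: nth_image[symmetric])
  have "{H \<in> cond_graphs. \<exists>x\<in>H. x \<in> Estar r n (es ! (i - 1))} = {H \<in> cond_graphs. H \<inter> Estar r n (es ! (i - 1)) \<noteq> {}}"
    by blast
  then have "prob_hit r n m es i = hit_prob"
    unfolding prob_hit_def hit_prob_def Lin_bar by simp
  moreover have "m - card (set (take (i - 1) es)) = m - i + 1"
    using distinct_card[of "take (i - 1) es"] es(2) ilt i km by simp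
  ultimately show ?thesis
    using hit_prob_estimate[OF r _ small] ne km unfolding Lin_bar by (simp add: mult.assoc)
qed

lemma eventually_m_squared_r6_small:
  fixes r m :: "nat \<Rightarrow> nat"
  assumes r3: "\<And>n. r n \<ge> 3"
    and m_small: "(\<lambda>n. real (m n)) \<in> o(\<lambda>n. real n powr (3/2) / real (r n) ^ 3)"
  shows "\<forall>\<^sub>F n in sequentially. real (m n) ^ 2 * real (r n) ^ 6 \<le> real n ^ 3 / 256"
proof -
  have "\<forall>\<^sub>F n in at_top. norm (real (m n)) \<le> (1/16) * norm (real n powr (3/2) / real (r n) ^ 3)"
    using landau_o.smallD[OF m_small, of "1/16"] by simp
  then show ?thesis
  proof eventually_elim
    case (elim n)
    have r0: "0 < real (r n)" using r3[of n] by simp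
    have "real (m n) \<le> (1/16) * (real n powr (3/2) / real (r n) ^ 3)" using elim r0 by simp
    then have "real (m n) * real (r n) ^ 3 \<le> (1/16) * real n powr (3/2)"
      using r0 by (simp add: le_divide_eq)
    moreover have "0 \<le> real (m n) * real (r n) ^ 3" by simp
    ultimately have "(real (m n) * real (r n) ^ 3) ^ 2 \<le> ((1/16) * real n powr (3/2)) ^ 2"
      by (rule power_mono)
    also have "\<dots> = (1/256) * (real n powr (3/2) * real n powr (3/2))" by (simp add: power2_eq_square)
    also have "real n powr (3/2) * real n powr (3/2) = real n ^ 3" by (simp add: powr_add[symmetric])
    finally show ?case by (simp add: power_mult_distrib power_mult[symmetric])
  qed
qed

theorem lemma10p2:
  fixes r m k :: "nat \<Rightarrow> nat"
  assumes r3: "\<And>n. r n \<ge> 3"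
    and km: "\<And>n. 1 \<le> k n \<and> k n \<le> m n"
    and m_small: "(\<lambda>n. real (m n)) \<in> o(\<lambda>n. real n powr (3/2) / real (r n) ^ 3)"
    and k_small: "(\<lambda>n. real (k n)) \<in> o(\<lambda>n. real n ^ 3 / (real (r n) ^ 6 * real (m n) ^ 2))"
  shows "\<exists>C. \<forall>\<^sub>F n in sequentially.
     \<forall>es i. length es = k n \<and> distinct es \<and> linear_rgraph n (r n) (set es)
       \<and> 1 \<le> i \<and> i \<le> k n \<and> Lin_bar (r n) n (m n) es i \<noteq> {} \<longrightarrow>
       \<bar>prob_hit (r n) n (m n) es i
          - real (m n - i + 1) * real (r n choose 2) * real ((n - r n) choose (r n - 2))
            / real (n choose r n)\<bar>
       \<le> C * (real (r n) ^ 6 * real (m n) ^ 2 / real n ^ 3)"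
  using eventually_m_squared_r6_small[OF r3 m_small]
  by (intro exI[of _ 400]) (elim eventually_mono, use prob_hit_estimate r3 km in blast)

end
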